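(* Let $f\in C^1$ and suppose $f'$ is Lipschitz continuous on the interval between $u_L$ and $u_R$ (i.e. on $[\min\{u_L,u_R\},\max\{u_L,u_R\}]$). Then the Riemann problem $U_t+f(U)_x=0$ for $x\in\mathbb{R}$, $t>0$, with $U(x,0)=u_L$ for $x<0$ and $U(x,0)=u_R$ for $x>0$, has at most one self-similar solution $U(x,t)=u^*(x/t)$ satisfying the viscous wave fan profile criterion.
   Context: Viscous wave fan profile criterion: a self-similar Riemann solution $U(x,t)=u^*(\xi)$, $\xi=x/t$, satisfies it iff there exist solutions $u_\varepsilon\in C^2(\mathbb{R})$ of the Dafermos ODE problem $\varepsilon u_{\xi\xi}=(f'(u)-\xi)u_\xi$ on $\mathbb{R}$, $u(-\infty)=u_L$, $u(+\infty)=u_R$, such that $u_\varepsilon\to u^*$ in $L^1_{loc}(\mathbb{R})$ as $\varepsilon\to 0$. The corollary follows from the paper's Theorem 1.1: under the stated Lipschitz hypothesis, for every $\varepsilon>0$ this ODE problem has exactly one solution. *)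

theory Defs
  imports "HOL-Analysis.Analysis"
begin

definition riemann_data :: "real \<Rightarrow> real \<Rightarrow> real \<Rightarrow> real" where
  "riemann_data uL uR x = (if x < 0 then uL else uR)"

text \<open>Test functions: C^1 with compact support on R x R (points are (x,t));
  phx and pht are the partial derivatives in x and t.\<close>
definition test_function ::
  "(real \<times> real \<Rightarrow> real) \<Rightarrow> (real \<times> real \<Rightarrow> real) \<Rightarrow> (real \<times> real \<Rightarrow> real) \<Rightarrow> bool" where
  "test_function ph phx pht \<longleftrightarrow>
     (\<forall>x t. ((\<lambda>s. ph (s, t)) has_real_derivative phx (x, t)) (at x)) \<and>
     (\<forall>x t. ((\<lambda>s. ph (x, s)) has_real_derivative pht (x, t)) (at t)) \<and>
     continuous_on UNIV phx \<and> continuous_on UNIV pht \<and>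
     (\<exists>R. \<forall>z. norm z > R \<longrightarrow> ph z = 0)"

text \<open>Weak solution of U_t + f(U)_x = 0 on x in R, t > 0 with U(x,0) = u0 x.\<close>
definition weak_solution ::
  "(real \<Rightarrow> real) \<Rightarrow> (real \<times> real \<Rightarrow> real) \<Rightarrow> (real \<Rightarrow> real) \<Rightarrow> bool" where
  "weak_solution f U u0 \<longleftrightarrow>
     U \<in> borel_measurable borel \<and>
     (\<forall>ph phx pht. test_function ph phx pht \<longrightarrow>
        set_integrable lborel {z. snd z > 0} (\<lambda>z. U z * pht z + f (U z) * phx z) \<and>
        (LINT z:{z. snd z > 0}|lborel. U z * pht z + f (U z) * phx z)
          + (LINT x|lborel. u0 x * ph (x, 0)) = 0)"

definition self_similar_riemann_solution ::
  "(real \<Rightarrow> real) \<Rightarrow> real \<Rightarrow> real \<Rightarrow> (real \<Rightarrow> real) \<Rightarrow> bool" where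
  "self_similar_riemann_solution f uL uR us \<longleftrightarrow>
     us \<in> borel_measurable borel \<and>
     weak_solution f (\<lambda>(x, t). us (x / t)) (riemann_data uL uR)"

definition dafermos_solution ::
  "(real \<Rightarrow> real) \<Rightarrow> real \<Rightarrow> real \<Rightarrow> real \<Rightarrow> (real \<Rightarrow> real) \<Rightarrow> bool" where
  "dafermos_solution f' uL uR \<epsilon> u \<longleftrightarrow>
     (\<exists>u1 u2. (\<forall>\<xi>. (u has_real_derivative u1 \<xi>) (at \<xi>)) \<and>
              (\<forall>\<xi>. (u1 has_real_derivative u2 \<xi>) (at \<xi>)) \<and>
              continuous_on UNIV u2 \<and>
              (\<forall>\<xi>. \<epsilon> * u2 \<xi> = (f' (u \<xi>) - \<xi>) * u1 \<xi>)) \<and>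
     (u \<longlongrightarrow> uL) at_bot \<and> (u \<longlongrightarrow> uR) at_top"

definition viscous_profile_criterion ::
  "(real \<Rightarrow> real) \<Rightarrow> real \<Rightarrow> real \<Rightarrow> (real \<Rightarrow> real) \<Rightarrow> bool" where
  "viscous_profile_criterion f' uL uR us \<longleftrightarrow>
     (\<forall>a b. set_integrable lborel {a..b} us) \<and>
     (\<exists>u :: real \<Rightarrow> real \<Rightarrow> real.
        (\<forall>\<epsilon>>0. dafermos_solution f' uL uR \<epsilon> (u \<epsilon>)) \<and>
        (\<forall>a b. ((\<lambda>\<epsilon>. LINT \<xi>:{a..b}|lborel. \<bar>u \<epsilon> \<xi> - us \<xi>\<bar>) \<longlongrightarrow> 0) (at_right 0)))"

end

theory Submission
  imports Defs
begin

(* For fixed \<epsilon> > 0 the Dafermos problem has at most one solution, so the two wave fans are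
   L^1_loc limits of one and the same family of profiles and agree almost everywhere.

   Uniqueness of the profile: u' solves a linear ODE, so it vanishes identically or nowhere;
   a nonconstant profile is therefore strictly monotone and, after the reflection u \<mapsto> -u,
   increasing from uL to uR. In the phase variable s = u x the profile is described by
   X = inv u and the slope p = u' \<circ> X, which satisfy X' = 1 / p and \<epsilon> p' = f' s - X, and p
   tends to 0 at both ends of (uL, uR). For two profiles, D = X\<^sub>1 - X\<^sub>2 and
   E = p\<^sub>1 - p\<^sub>2 satisfy (D E)' = - E^2 / (p\<^sub>1 p\<^sub>2) - D^2 / \<epsilon> \<le> 0 and
   (E^2)' = - 2 D E / \<epsilon>; since E vanishes at both ends this forces D E = 0, hence D = 0. *)

lemma linear_ode_vanishing:
  fixes w a :: "real \<Rightarrow> real"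
  assumes w': "\<And>x. (w has_real_derivative a x * w x) (at x)"
    and a: "continuous_on UNIV a" and "w x0 = 0"
  shows "w x = 0"
proof -
  obtain A where A': "\<And>x. (A has_real_derivative a x) (at x)"
  proof -
    have "\<exists>A. \<forall>x::real. -\<infinity> < ereal x \<longrightarrow> ereal x < \<infinity> \<longrightarrow>
        (A has_vector_derivative a x) (at x)"
      by (rule einterval_antiderivative) (use a in \<open>auto simp: continuous_on_eq_continuous_at\<close>)
    then show ?thesis
      using that by (auto simp: has_real_derivative_iff_has_vector_derivative)
  qed
  have "((\<lambda>y. w y * exp (- A y)) has_real_derivative 0) (at y)" for y
  proof -
    have "((\<lambda>y. w y * exp (- A y)) has_real_derivative
        w y * (exp (- A y) * - a y) + a y * w y * exp (- A y)) (at y)"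
      by (rule DERIV_mult'[OF w' DERIV_fun_exp[OF DERIV_minus[OF A']]])
    then show ?thesis
      by (simp add: algebra_simps)
  qed
  then have "w x * exp (- A x) = w x0 * exp (- A x0)"
    using DERIV_isconst_all[of "\<lambda>y. w y * exp (- A y)"] by blast
  then show ?thesis
    using \<open>w x0 = 0\<close> by simp
qed

lemma derivative_tendsto_zero_at_top:
  fixes u u' u'' :: "real \<Rightarrow> real"
  assumes u': "\<And>x. (u has_real_derivative u' x) (at x)"
    and u'': "\<And>x. (u' has_real_derivative u'' x) (at x)"
    and nonneg: "\<And>x. u' x \<ge> 0" and concave: "\<forall>\<^sub>F x in at_top. u'' x \<le> 0"
    and bounded: "\<And>x. u x \<le> C"
  shows "(u' \<longlongrightarrow> 0) at_top"
proof (rule order_tendstoI)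
  fix \<delta> :: real assume "\<delta> > 0"
  obtain M where M: "\<And>x. x \<ge> M \<Longrightarrow> u'' x \<le> 0"
    using concave by (auto simp: eventually_at_top_linorder)
  have "\<exists>x0\<ge>M. u' x0 < \<delta>"
  proof (rule ccontr)
    assume "\<not> ?thesis"
    then have big: "\<delta> \<le> u' x" if "M \<le> x" for x
      using that by (meson not_le)
    define Y where "Y = M + (C - u M) / \<delta> + 1"
    have "M \<le> Y"
      using bounded[of M] \<open>\<delta> > 0\<close> by (simp add: Y_def)
    then have "u M - \<delta> * M \<le> u Y - \<delta> * Y"
    proof (rule DERIV_nonneg_imp_nondecreasing)
      fix x assume "M \<le> x"
      have "((\<lambda>x. u x - \<delta> * x) has_real_derivative u' x - \<delta>) (at x)"
        using DERIV_diff[OF u' DERIV_cmult[OF DERIV_ident]] by simp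
      then show "\<exists>y. ((\<lambda>x. u x - \<delta> * x) has_real_derivative y) (at x) \<and> 0 \<le> y"
        using big[OF \<open>M \<le> x\<close>] by auto
    qed
    then have "u M + \<delta> * (Y - M) \<le> u Y"
      by (simp add: algebra_simps)
    also have "\<delta> * (Y - M) = C - u M + \<delta>"
      using \<open>\<delta> > 0\<close> by (simp add: Y_def field_simps)
    finally show False
      using bounded[of Y] \<open>\<delta> > 0\<close> by simp
  qed
  then obtain x0 where x0: "M \<le> x0" "u' x0 < \<delta>"
    by blast
  have "u' x \<le> u' x0" if "x0 \<le> x" for x
    by (rule DERIV_nonpos_imp_nonincreasing[OF that]) (use u'' M x0 in force)
  then show "\<forall>\<^sub>F x in at_top. u' x < \<delta>"
    using x0(2) by (auto simp: eventually_at_top_linorder intro: le_less_trans)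
next
  fix a :: real assume "a < 0"
  then show "\<forall>\<^sub>F x in at_top. a < u' x"
    by (intro always_eventually allI) (meson nonneg less_le_trans)
qed

lemma derivative_tendsto_zero_at_bot:
  fixes u u' u'' :: "real \<Rightarrow> real"
  assumes u': "\<And>x. (u has_real_derivative u' x) (at x)"
    and u'': "\<And>x. (u' has_real_derivative u'' x) (at x)"
    and nonneg: "\<And>x. u' x \<ge> 0" and convex: "\<forall>\<^sub>F x in at_bot. u'' x \<ge> 0"
    and bounded: "\<And>x. u x \<ge> C"
  shows "(u' \<longlongrightarrow> 0) at_bot"
proof -
  have "((\<lambda>x. u' (- x)) \<longlongrightarrow> 0) at_top"
  proof (rule derivative_tendsto_zero_at_top[where C = "- C"])
    show "((\<lambda>x. - u (- x)) has_real_derivative u' (- x)) (at x)" for x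
      using DERIV_minus[OF DERIV_chain2[OF u' DERIV_minus[OF DERIV_ident]]] by simp
    show "((\<lambda>x. u' (- x)) has_real_derivative - u'' (- x)) (at x)" for x
      using DERIV_chain2[OF u'' DERIV_minus[OF DERIV_ident]] by simp
    show "\<forall>\<^sub>F x in at_top. - u'' (- x) \<le> 0"
      using convex unfolding eventually_at_bot_linorder eventually_at_top_linorder
      by (metis neg_le_0_iff_le minus_le_iff)
  qed (use nonneg bounded in auto)
  then show ?thesis
    by (simp add: filterlim_at_bot_mirror)
qed

lemma phase_difference_vanishes:
  fixes D E P :: "real \<Rightarrow> real" and e a b s :: real
  assumes "e > 0"
    and D': "\<And>s. a < s \<Longrightarrow> s < b \<Longrightarrow> (D has_real_derivative - E s / P s) (at s)"
    and E': "\<And>s. a < s \<Longrightarrow> s < b \<Longrightarrow> (E has_real_derivative - D s / e) (at s)"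
    and P: "\<And>s. a < s \<Longrightarrow> s < b \<Longrightarrow> P s > 0"
    and E_left: "(E \<longlongrightarrow> 0) (at_right a)" and E_right: "(E \<longlongrightarrow> 0) (at_left b)"
    and s: "a < s" "s < b"
  shows "D s = 0"
proof -
  define G where "G s = D s * E s" for s
  define Q where "Q s = (E s)\<^sup>2" for s
  have G': "(G has_real_derivative - (E s)\<^sup>2 / P s - (D s)\<^sup>2 / e) (at s)"
    if "a < s" "s < b" for s
  proof -
    have "(G has_real_derivative - E s / P s * E s + - D s / e * D s) (at s)"
      unfolding G_def using DERIV_mult[OF D' E'] that by simp
    then show ?thesis
      by (simp add: power2_eq_square)
  qed
  have squares_nonneg: "0 \<le> (E s)\<^sup>2 / P s" "0 \<le> (D s)\<^sup>2 / e" if "a < s" "s < b" for s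
    using P[OF that] \<open>e > 0\<close> by simp_all
  have G'_nonpos: "- (E s)\<^sup>2 / P s - (D s)\<^sup>2 / e \<le> 0" if "a < s" "s < b" for s
    using squares_nonneg[OF that] by linarith
  have G_antimono: "G t \<le> G s" if "a < s" "s \<le> t" "t < b" for s t
    using \<open>s \<le> t\<close>
    by (rule DERIV_nonpos_imp_nonincreasing) (use that G' G'_nonpos in force)
  have Q': "(Q has_real_derivative - 2 * G s / e) (at s)" if "a < s" "s < b" for s
  proof -
    have "(Q has_real_derivative 2 * E s * (- D s / e)) (at s)"
      unfolding Q_def using DERIV_power[OF E'[OF that], of 2] by (simp add: ac_simps)
    moreover have "2 * E s * (- D s / e) = - 2 * G s / e"
      by (simp add: G_def)
    ultimately show ?thesis
      by (simp only:)
  qed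
  have Q_left: "(Q \<longlongrightarrow> 0) (at_right a)" and Q_right: "(Q \<longlongrightarrow> 0) (at_left b)"
    unfolding Q_def using tendsto_power[OF E_left, of 2] tendsto_power[OF E_right, of 2] by simp_all
  \<comment> \<open>Where G > 0, G stays positive to the left, so Q = E^2 increases towards the left end,
    contradicting E \<longrightarrow> 0 there; where G < 0, symmetrically at the right end.\<close>
  have G_zero: "G s0 = 0" if s0: "a < s0" "s0 < b" for s0
  proof (rule ccontr)
    assume "G s0 \<noteq> 0"
    then have "Q s0 > 0"
      by (simp add: G_def Q_def)
    consider "G s0 > 0" | "G s0 < 0"
      using \<open>G s0 \<noteq> 0\<close> by linarith
    then show False
    proof cases
      case 1
      have "Q s0 \<le> Q s" if "a < s" "s \<le> s0" for s
        using \<open>s \<le> s0\<close>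
      proof (rule DERIV_nonpos_imp_nonincreasing)
        fix x assume "s \<le> x" "x \<le> s0"
        then have "0 < G x"
          using G_antimono[of x s0] 1 that s0 by linarith
        then show "\<exists>y. (Q has_real_derivative y) (at x) \<and> y \<le> 0"
          using Q'[of x] \<open>s \<le> x\<close> \<open>x \<le> s0\<close> that s0 \<open>e > 0\<close>
          by (intro exI[of _ "- 2 * G x / e"]) auto
      qed
      then have "\<forall>\<^sub>F s in at_right a. Q s0 \<le> Q s"
        unfolding eventually_at_right_field using s0 by auto
      then have "Q s0 \<le> 0"
        by (intro tendsto_lowerbound[OF Q_left]) simp_all
      then show False
        using \<open>Q s0 > 0\<close> by simp
    next
      case 2
      have "Q s0 \<le> Q s" if "s0 \<le> s" "s < b" for s
        using \<open>s0 \<le> s\<close>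
      proof (rule DERIV_nonneg_imp_nondecreasing)
        fix x assume "s0 \<le> x" "x \<le> s"
        then have "G x < 0"
          using G_antimono[of s0 x] 2 that s0 by linarith
        then show "\<exists>y. (Q has_real_derivative y) (at x) \<and> 0 \<le> y"
          using Q'[of x] \<open>s0 \<le> x\<close> \<open>x \<le> s\<close> that s0 \<open>e > 0\<close>
          by (intro exI[of _ "- 2 * G x / e"]) (auto simp: divide_nonpos_pos)
      qed
      then have "\<forall>\<^sub>F s in at_left b. Q s0 \<le> Q s"
        unfolding eventually_at_left_field using s0 by auto
      then have "Q s0 \<le> 0"
        by (intro tendsto_lowerbound[OF Q_right]) simp_all
      then show False
        using \<open>Q s0 > 0\<close> by simp
    qed
  qed
  have "(G has_real_derivative 0) (at s)"
    by (rule has_field_derivative_transform_within_open[of "\<lambda>_. 0" _ _ "{a<..<b}"])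
      (use s G_zero in auto)
  then have "- (E s)\<^sup>2 / P s - (D s)\<^sup>2 / e = 0"
    using DERIV_unique G'[OF s] by blast
  then have "(D s)\<^sup>2 / e \<le> 0"
    using squares_nonneg[OF s] by linarith
  then show ?thesis
    using \<open>e > 0\<close> by (simp add: divide_le_0_iff)
qed

lemma strict_mono_between_limits:
  fixes u :: "real \<Rightarrow> real"
  assumes "strict_mono u" "(u \<longlongrightarrow> l) at_bot" "(u \<longlongrightarrow> r) at_top"
  shows "l < u x" "u x < r"
proof -
  have mono: "mono u"
    using assms(1) by (rule strict_mono_mono)
  have "\<forall>\<^sub>F y in at_bot. u y \<le> u (x - 1)"
    unfolding eventually_at_bot_linorder by (rule exI[of _ "x - 1"]) (auto intro: monoD[OF mono])
  with assms(2) have "l \<le> u (x - 1)"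
    by (rule tendsto_upperbound) simp
  then show "l < u x"
    using strict_monoD[OF assms(1), of "x - 1" x] by simp
  have "\<forall>\<^sub>F y in at_top. u (x + 1) \<le> u y"
    unfolding eventually_at_top_linorder by (rule exI[of _ "x + 1"]) (auto intro: monoD[OF mono])
  with assms(3) have "u (x + 1) \<le> r"
    by (rule tendsto_lowerbound) simp
  then show "u x < r"
    using strict_monoD[OF assms(1), of x "x + 1"] by simp
qed

lemma strict_mono_if_deriv_pos:
  fixes u u' :: "real \<Rightarrow> real"
  assumes "\<And>x. (u has_real_derivative u' x) (at x)" "\<And>x. 0 < u' x"
  shows "strict_mono u"
proof (rule strict_monoI)
  fix x y :: real
  assume "x < y"
  then show "u x < u y"
    by (rule DERIV_pos_imp_increasing) (use assms in blast)
qed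

locale dafermos_profile =
  fixes f' :: "real \<Rightarrow> real" and \<epsilon> uL uR :: real and u u' u'' :: "real \<Rightarrow> real"
  assumes f'_cont: "continuous_on UNIV f'" and eps_pos: "\<epsilon> > 0"
    and u': "\<And>x. (u has_real_derivative u' x) (at x)"
    and u'': "\<And>x. (u' has_real_derivative u'' x) (at x)"
    and ode: "\<And>x. \<epsilon> * u'' x = (f' (u x) - x) * u' x"
    and tendsto_uL: "(u \<longlongrightarrow> uL) at_bot" and tendsto_uR: "(u \<longlongrightarrow> uR) at_top"
begin

lemma u''_eq: "u'' x = (f' (u x) - x) / \<epsilon> * u' x"
  using ode[of x] eps_pos by (simp add: field_simps)

lemma isCont_u: "isCont u x"
  using u' by (rule DERIV_isCont)

lemma isCont_u': "isCont u' x"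
  using u'' by (rule DERIV_isCont)

lemma u'_constant_sign: "(\<forall>x. u' x = 0) \<or> (\<forall>x. 0 < u' x) \<or> (\<forall>x. u' x < 0)"
proof (cases "\<exists>x0. u' x0 = 0")
  case True
  then obtain x0 where "u' x0 = 0" ..
  have "continuous_on UNIV (\<lambda>x. (f' (u x) - x) / \<epsilon>)"
    by (intro continuous_intros continuous_on_compose2[OF f'_cont] continuous_at_imp_continuous_on)
      (use isCont_u eps_pos in auto)
  then have "u' x = 0" for x
    using \<open>u' x0 = 0\<close> by (rule linear_ode_vanishing[OF u''[unfolded u''_eq]])
  then show ?thesis by blast
next
  case False
  have "\<not> (0 < u' x \<and> u' y < 0)" for x y
  proof
    assume "0 < u' x \<and> u' y < 0"
    then have "0 \<in> closed_segment (u' x) (u' y)"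
      by (simp add: closed_segment_eq_real_ivl)
    then obtain z where "u' z = 0"
      using IVT'_closed_segment_real[of 0 u' x y] isCont_u' continuous_at_imp_continuous_on by blast
    then show False
      using False by blast
  qed
  then show ?thesis
    using False by (cases "0 < u' 0") (metis linorder_neqE_linordered_idom)+
qed

lemma profile_cases:
  "(uL = uR \<and> (\<forall>x. u x = uL)) \<or> (uL < uR \<and> (\<forall>x. 0 < u' x)) \<or>
    (uR < uL \<and> (\<forall>x. u' x < 0))"
  using u'_constant_sign
proof (elim disjE)
  assume "\<forall>x. u' x = 0"
  then have "u = (\<lambda>_. u 0)"
    using u' by (intro ext DERIV_isconst_all) metis
  then have "uL = u 0" "uR = u 0"
    using tendsto_uL tendsto_uR by (metis tendsto_const_iff trivial_limit_at_bot_linorder trivial_limit_at_top_linorder)+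
  then show ?thesis
    using \<open>u = (\<lambda>_. u 0)\<close> by (metis)
next
  assume "\<forall>x. 0 < u' x"
  then have "strict_mono u"
    using u' by (blast intro: strict_mono_if_deriv_pos)
  then show ?thesis
    using strict_mono_between_limits[OF _ tendsto_uL tendsto_uR, of 0] \<open>\<forall>x. 0 < u' x\<close> by auto
next
  assume "\<forall>x. u' x < 0"
  then have "strict_mono (\<lambda>x. - u x)"
    using u' by (intro strict_mono_if_deriv_pos[of _ "\<lambda>x. - u' x"]) (auto intro: DERIV_minus)
  then show ?thesis
    using strict_mono_between_limits[OF _ tendsto_minus[OF tendsto_uL] tendsto_minus[OF tendsto_uR], of 0]
      \<open>\<forall>x. u' x < 0\<close> by auto
qed

end

lemma dafermos_profile_reflect:
  assumes "dafermos_profile f' \<epsilon> uL uR u u' u''"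
  shows "dafermos_profile (\<lambda>y. f' (- y)) \<epsilon> (- uL) (- uR)
    (\<lambda>x. - u x) (\<lambda>x. - u' x) (\<lambda>x. - u'' x)"
proof -
  interpret dafermos_profile f' \<epsilon> uL uR u u' u'' by (fact assms)
  show ?thesis
  proof
    show "continuous_on UNIV (\<lambda>y. f' (- y))"
      by (rule continuous_on_compose2[OF f'_cont continuous_on_minus[OF continuous_on_id]]) simp
  qed (use eps_pos DERIV_minus[OF u'] DERIV_minus[OF u''] ode tendsto_minus[OF tendsto_uL]
      tendsto_minus[OF tendsto_uR] in simp_all)
qed

locale increasing_dafermos_profile = dafermos_profile +
  assumes u'_pos: "\<And>x. 0 < u' x"
begin

lemma strict_mono_u: "strict_mono u"
  using u' u'_pos by (rule strict_mono_if_deriv_pos)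

lemma u_between: "uL < u x" "u x < uR"
  using strict_mono_between_limits[OF strict_mono_u tendsto_uL tendsto_uR] by auto

lemma inv_u_u: "inv u (u x) = x"
  using strict_mono_on_imp_inj_on[OF strict_mono_u] by simp

lemma u_inv_u:
  assumes "uL < s" "s < uR"
  shows "u (inv u s) = s"
proof -
  obtain a where "u a < s"
    using order_tendstoD(2)[OF tendsto_uL \<open>uL < s\<close>] by (auto simp: eventually_at_bot_linorder)
  moreover obtain b where "s < u b"
    using order_tendstoD(1)[OF tendsto_uR \<open>s < uR\<close>] by (auto simp: eventually_at_top_linorder)
  ultimately have "a \<le> b"
    using strict_mono_less[OF strict_mono_u, of a b] by linarith
  moreover have "continuous_on {a..b} u"
    using isCont_u by (simp add: continuous_at_imp_continuous_on)
  ultimately obtain x where "u x = s"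
    using IVT'[of u a s b, OF less_imp_le[OF \<open>u a < s\<close>] less_imp_le[OF \<open>s < u b\<close>]] by blast
  then have "s \<in> range u"
    by blast
  then show ?thesis
    by (rule f_inv_into_f)
qed

lemma inv_u_less_iff:
  assumes "uL < s" "s < uR"
  shows "inv u s < x \<longleftrightarrow> s < u x"
  using strict_mono_less[OF strict_mono_u, of "inv u s" x] u_inv_u[OF assms] by simp

definition slope :: "real \<Rightarrow> real" where
  "slope s = u' (inv u s)"

lemma slope_pos: "0 < slope s"
  by (simp add: slope_def u'_pos)

lemma inv_u_deriv:
  assumes "uL < s" "s < uR"
  shows "(inv u has_real_derivative 1 / slope s) (at s)"
proof -
  have "isCont (inv u) (u (inv u s))"
    by (rule isCont_inverse_function[where d = 1 and f = u and g = "inv u"]) (simp_all add: inv_u_u isCont_u)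
  then have "isCont (inv u) s"
    by (simp add: u_inv_u[OF assms])
  have "(inv u has_real_derivative inverse (u' (inv u s))) (at s)"
  proof (rule DERIV_inverse_function[where f = u and g = "inv u" and a = uL and b = uR])
    show "(u has_real_derivative u' (inv u s)) (at (inv u s))"
      by (rule u')
  qed (use assms u_inv_u u'_pos[of "inv u s"] \<open>isCont (inv u) s\<close> in auto)
  then show ?thesis
    by (simp add: slope_def inverse_eq_divide)
qed

lemma slope_deriv:
  assumes "uL < s" "s < uR"
  shows "(slope has_real_derivative (f' s - inv u s) / \<epsilon>) (at s)"
proof -
  have "(slope has_real_derivative u'' (inv u s) * (1 / slope s)) (at s)"
    unfolding slope_def[abs_def] by (rule DERIV_chain2[OF u'' inv_u_deriv[OF assms, unfolded slope_def]])
  then show ?thesis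
    using u''_eq[of "inv u s"] u_inv_u[OF assms] slope_pos[of s] by (simp add: slope_def)
qed

lemma inv_u_at_left_end: "filterlim (inv u) at_bot (at_right uL)"
  unfolding filterlim_at_bot eventually_at_right_field
proof
  fix Z
  show "\<exists>b>uL. \<forall>s>uL. s < b \<longrightarrow> inv u s \<le> Z"
    using u_between[of Z] inv_u_less_iff by (intro exI[of _ "u Z"]) (auto intro: less_imp_le)
qed

lemma inv_u_at_right_end: "filterlim (inv u) at_top (at_left uR)"
  unfolding filterlim_at_top eventually_at_left_field
proof
  fix Z
  show "\<exists>b<uR. \<forall>s>b. s < uR \<longrightarrow> Z \<le> inv u s"
    using u_between[of Z] inv_u_less_iff by (intro exI[of _ "u Z"]) (auto simp: not_less[symmetric])
qed

\<comment> \<open>u'' has the sign of f' (u x) - x, which is fixed once |x| exceeds a bound of |f'| on [uL, uR].\<close>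
lemma u'_tendsto_zero: "(u' \<longlongrightarrow> 0) at_bot" "(u' \<longlongrightarrow> 0) at_top"
proof -
  have "bounded (f' ` {uL..uR})"
    by (intro compact_imp_bounded compact_continuous_image continuous_on_subset[OF f'_cont]) auto
  then obtain M where M: "\<forall>y\<in>{uL..uR}. \<bar>f' y\<bar> \<le> M"
    by (auto simp: bounded_real)
  have f'_u: "\<bar>f' (u x)\<bar> \<le> M" for x
    using M u_between[of x] by (simp add: less_imp_le)
  have "0 \<le> u'' x" if "x \<le> - M" for x
  proof -
    have "0 \<le> (f' (u x) - x) / \<epsilon>"
      using f'_u[of x] that eps_pos by simp
    then show ?thesis
      unfolding u''_eq using u'_pos[of x] by (metis mult_nonneg_nonneg less_imp_le)
  qed
  then have "\<forall>\<^sub>F x in at_bot. 0 \<le> u'' x"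
    unfolding eventually_at_bot_linorder by blast
  then show "(u' \<longlongrightarrow> 0) at_bot"
    using u_between(1) by (intro derivative_tendsto_zero_at_bot[OF u' u'', of uL]) (simp_all add: less_imp_le u'_pos)
  have "u'' x \<le> 0" if "M \<le> x" for x
  proof -
    have "(f' (u x) - x) / \<epsilon> \<le> 0"
      using f'_u[of x] that eps_pos by (simp add: divide_nonpos_pos)
    then show ?thesis
      unfolding u''_eq using u'_pos[of x] by (metis mult_nonpos_nonneg less_imp_le)
  qed
  then have "\<forall>\<^sub>F x in at_top. u'' x \<le> 0"
    unfolding eventually_at_top_linorder by blast
  then show "(u' \<longlongrightarrow> 0) at_top"
    using u_between(2) by (intro derivative_tendsto_zero_at_top[OF u' u'', of uR]) (simp_all add: less_imp_le u'_pos)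
qed

lemma slope_tendsto_zero: "(slope \<longlongrightarrow> 0) (at_right uL)" "(slope \<longlongrightarrow> 0) (at_left uR)"
  unfolding slope_def[abs_def]
  by (rule filterlim_compose[OF u'_tendsto_zero(1) inv_u_at_left_end]
      filterlim_compose[OF u'_tendsto_zero(2) inv_u_at_right_end])+

end

lemma increasing_dafermos_profiles_eq:
  assumes "increasing_dafermos_profile f' \<epsilon> uL uR u u' u''"
    and "increasing_dafermos_profile f' \<epsilon> uL uR v v' v''"
  shows "u = v"
proof
  interpret U: increasing_dafermos_profile f' \<epsilon> uL uR u u' u'' by (fact assms(1))
  interpret V: increasing_dafermos_profile f' \<epsilon> uL uR v v' v'' by (fact assms(2))
  have inv_diff_zero: "inv u s - inv v s = 0" if "uL < s" "s < uR" for s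
  proof (rule phase_difference_vanishes[where D = "\<lambda>s. inv u s - inv v s" and E = "\<lambda>s. U.slope s - V.slope s"
        and P = "\<lambda>s. U.slope s * V.slope s"])
    fix s assume s: "uL < s" "s < uR"
    have "((\<lambda>s. inv u s - inv v s) has_real_derivative 1 / U.slope s - 1 / V.slope s) (at s)"
      using U.inv_u_deriv[OF s] V.inv_u_deriv[OF s] by (rule DERIV_diff)
    then show "((\<lambda>s. inv u s - inv v s) has_real_derivative
        - (U.slope s - V.slope s) / (U.slope s * V.slope s)) (at s)"
      using U.slope_pos[of s] V.slope_pos[of s] by (simp add: field_simps)
    have "((\<lambda>s. U.slope s - V.slope s) has_real_derivative
        (f' s - inv u s) / \<epsilon> - (f' s - inv v s) / \<epsilon>) (at s)"
      using U.slope_deriv[OF s] V.slope_deriv[OF s] by (rule DERIV_diff)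
    then show "((\<lambda>s. U.slope s - V.slope s) has_real_derivative - (inv u s - inv v s) / \<epsilon>) (at s)"
      by (simp add: diff_divide_distrib)
    show "0 < U.slope s * V.slope s"
      using U.slope_pos V.slope_pos by simp
  next
    show "((\<lambda>s. U.slope s - V.slope s) \<longlongrightarrow> 0) (at_right uL)"
      using tendsto_diff[OF U.slope_tendsto_zero(1) V.slope_tendsto_zero(1)] by simp
    show "((\<lambda>s. U.slope s - V.slope s) \<longlongrightarrow> 0) (at_left uR)"
      using tendsto_diff[OF U.slope_tendsto_zero(2) V.slope_tendsto_zero(2)] by simp
  qed (use U.eps_pos that in auto)
  fix x
  have "inv v (u x) = x"
    using inv_diff_zero[OF U.u_between[of x]] U.inv_u_u[of x] by simp
  then show "u x = v x"
    using V.u_inv_u[OF U.u_between[of x]] by simp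
qed

lemma increasing_dafermos_profileI:
  assumes "dafermos_profile f' \<epsilon> uL uR u u' u''" "uL < uR"
  shows "increasing_dafermos_profile f' \<epsilon> uL uR u u' u''"
proof (intro increasing_dafermos_profile.intro increasing_dafermos_profile_axioms.intro assms(1))
  show "0 < u' x" for x
    using dafermos_profile.profile_cases[OF assms(1)] assms(2) by auto
qed

lemma dafermos_profiles_eq:
  assumes u: "dafermos_profile f' \<epsilon> uL uR u u' u''" and v: "dafermos_profile f' \<epsilon> uL uR v v' v''"
  shows "u = v"
proof -
  consider "uL = uR" | "uL < uR" | "uR < uL"
    by linarith
  then show ?thesis
  proof cases
    case 1
    then have "u x = uL" "v x = uL" for x
      using dafermos_profile.profile_cases[OF u] dafermos_profile.profile_cases[OF v] by simp_all
    then show ?thesis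
      by auto
  next
    case 2
    show ?thesis
      by (rule increasing_dafermos_profiles_eq[OF increasing_dafermos_profileI[OF u 2]
            increasing_dafermos_profileI[OF v 2]])
  next
    case 3
    then have order: "- uL < - uR"
      by simp
    have "(\<lambda>x. - u x) = (\<lambda>x. - v x)"
      by (rule increasing_dafermos_profiles_eq[OF
            increasing_dafermos_profileI[OF dafermos_profile_reflect[OF u] order]
            increasing_dafermos_profileI[OF dafermos_profile_reflect[OF v] order]])
    then show ?thesis
      by (simp add: fun_eq_iff)
  qed
qed

lemma dafermos_profile_if_solution:
  assumes "continuous_on UNIV f'" "\<epsilon> > 0" "dafermos_solution f' uL uR \<epsilon> u"
  obtains u' u'' where "dafermos_profile f' \<epsilon> uL uR u u' u''"
proof -
  obtain u' u'' where
    "\<forall>\<xi>. (u has_real_derivative u' \<xi>) (at \<xi>)" "\<forall>\<xi>. (u' has_real_derivative u'' \<xi>) (at \<xi>)"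
    "\<forall>\<xi>. \<epsilon> * u'' \<xi> = (f' (u \<xi>) - \<xi>) * u' \<xi>"
    "(u \<longlongrightarrow> uL) at_bot" "(u \<longlongrightarrow> uR) at_top"
    using assms(3) unfolding dafermos_solution_def by blast
  with assms(1,2) show ?thesis
    by (intro that[of u' u''] dafermos_profile.intro) simp_all
qed

lemma dafermos_solution_unique:
  assumes "continuous_on UNIV f'" "\<epsilon> > 0"
    and "dafermos_solution f' uL uR \<epsilon> u" "dafermos_solution f' uL uR \<epsilon> v"
  shows "u = v"
proof -
  obtain u' u'' v' v'' where "dafermos_profile f' \<epsilon> uL uR u u' u''" "dafermos_profile f' \<epsilon> uL uR v v' v''"
    using dafermos_profile_if_solution[OF assms(1,2,3)] dafermos_profile_if_solution[OF assms(1,2,4)] by metis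
  then show ?thesis
    by (rule dafermos_profiles_eq)
qed

lemma continuous_on_dafermos_solution:
  "dafermos_solution f' uL uR \<epsilon> u \<Longrightarrow> continuous_on UNIV u"
  unfolding dafermos_solution_def by (metis DERIV_isCont continuous_at_imp_continuous_on)

lemma AE_eq_on_if_common_L1_limit:
  fixes U :: "'a \<Rightarrow> 'b \<Rightarrow> real" and f g :: "'b \<Rightarrow> real"
  assumes "F \<noteq> bot"
    and f: "set_integrable M A f" and g: "set_integrable M A g"
    and U: "\<forall>\<^sub>F e in F. set_integrable M A (U e)"
    and Uf: "((\<lambda>e. LINT x:A|M. \<bar>U e x - f x\<bar>) \<longlongrightarrow> 0) F"
    and Ug: "((\<lambda>e. LINT x:A|M. \<bar>U e x - g x\<bar>) \<longlongrightarrow> 0) F"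
  shows "AE x in M. x \<in> A \<longrightarrow> f x = g x"
proof -
  have fg: "set_integrable M A (\<lambda>x. \<bar>f x - g x\<bar>)"
    by (intro set_integrable_abs set_integral_diff(1) f g)
  have "\<forall>\<^sub>F e in F. (LINT x:A|M. \<bar>f x - g x\<bar>) \<le>
      (LINT x:A|M. \<bar>U e x - f x\<bar>) + (LINT x:A|M. \<bar>U e x - g x\<bar>)"
    using U
  proof eventually_elim
    case (elim e)
    have Uf: "set_integrable M A (\<lambda>x. \<bar>U e x - f x\<bar>)"
      and Ug: "set_integrable M A (\<lambda>x. \<bar>U e x - g x\<bar>)"
      by (intro set_integrable_abs set_integral_diff(1) elim f g)+
    have "(LINT x:A|M. \<bar>f x - g x\<bar>) \<le> (LINT x:A|M. \<bar>U e x - f x\<bar> + \<bar>U e x - g x\<bar>)"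
      by (rule set_integral_mono[OF fg set_integral_add(1)[OF Uf Ug]]) linarith
    also have "\<dots> = (LINT x:A|M. \<bar>U e x - f x\<bar>) + (LINT x:A|M. \<bar>U e x - g x\<bar>)"
      by (rule set_integral_add(2)[OF Uf Ug])
    finally show ?case .
  qed
  with tendsto_add[OF Uf Ug] \<open>F \<noteq> bot\<close> have "(LINT x:A|M. \<bar>f x - g x\<bar>) \<le> 0"
    by (intro tendsto_lowerbound) simp_all
  moreover have "0 \<le> (LINT x:A|M. \<bar>f x - g x\<bar>)"
    unfolding set_lebesgue_integral_def by (rule integral_nonneg_AE) (simp add: indicator_def)
  ultimately have "(LINT x:A|M. \<bar>f x - g x\<bar>) = 0"
    by simp
  then have "AE x in M. indicator A x *\<^sub>R \<bar>f x - g x\<bar> = 0"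
    using fg integral_nonneg_eq_0_iff_AE[of M "\<lambda>x. indicator A x *\<^sub>R \<bar>f x - g x\<bar>"]
    unfolding set_lebesgue_integral_def set_integrable_def by simp
  then show ?thesis
    by (rule eventually_mono) (auto simp: indicator_def)
qed

lemma AE_eq_if_common_L1_loc_limit:
  fixes U :: "'a \<Rightarrow> real \<Rightarrow> real" and f g :: "real \<Rightarrow> real"
  assumes "F \<noteq> bot"
    and "\<And>a b. set_integrable lborel {a..b} f" "\<And>a b. set_integrable lborel {a..b} g"
    and "\<And>a b. \<forall>\<^sub>F e in F. set_integrable lborel {a..b} (U e)"
    and "\<And>a b. ((\<lambda>e. LINT x:{a..b}|lborel. \<bar>U e x - f x\<bar>) \<longlongrightarrow> 0) F"
    and "\<And>a b. ((\<lambda>e. LINT x:{a..b}|lborel. \<bar>U e x - g x\<bar>) \<longlongrightarrow> 0) F"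
  shows "AE x in lborel. f x = g x"
proof -
  have "AE x in lborel. \<forall>n::nat. x \<in> {- real n..real n} \<longrightarrow> f x = g x"
    unfolding AE_all_countable
    by (intro allI AE_eq_on_if_common_L1_limit[where F = F and U = U] assms)
  then show ?thesis
  proof (rule eventually_mono)
    fix x :: real
    assume "\<forall>n::nat. x \<in> {- real n..real n} \<longrightarrow> f x = g x"
    moreover have "x \<in> {- real (nat \<lceil>\<bar>x\<bar>\<rceil>)..real (nat \<lceil>\<bar>x\<bar>\<rceil>)}"
      by auto linarith+
    ultimately show "f x = g x"
      by blast
  qed
qed

theorem corollary1p2:
  fixes f f' :: "real \<Rightarrow> real" and uL uR :: real and us vs :: "real \<Rightarrow> real"
  assumes "\<forall>u. (f has_real_derivative f' u) (at u)"
    and "continuous_on UNIV f'"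
    and "\<exists>L. L-lipschitz_on {min uL uR..max uL uR} f'"
    and "self_similar_riemann_solution f uL uR us"
    and "viscous_profile_criterion f' uL uR us"
    and "self_similar_riemann_solution f uL uR vs"
    and "viscous_profile_criterion f' uL uR vs"
  shows "AE \<xi> in lborel. us \<xi> = vs \<xi>"
proof -
  obtain U where us_int: "\<And>a b. set_integrable lborel {a..b} us"
    and U: "\<And>\<epsilon>. \<epsilon> > 0 \<Longrightarrow> dafermos_solution f' uL uR \<epsilon> (U \<epsilon>)"
    and U_us: "\<And>a b. ((\<lambda>\<epsilon>. LINT \<xi>:{a..b}|lborel. \<bar>U \<epsilon> \<xi> - us \<xi>\<bar>) \<longlongrightarrow> 0) (at_right 0)"
    using assms(5) unfolding viscous_profile_criterion_def by blast
  obtain V where vs_int: "\<And>a b. set_integrable lborel {a..b} vs"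
    and V: "\<And>\<epsilon>. \<epsilon> > 0 \<Longrightarrow> dafermos_solution f' uL uR \<epsilon> (V \<epsilon>)"
    and V_vs: "\<And>a b. ((\<lambda>\<epsilon>. LINT \<xi>:{a..b}|lborel. \<bar>V \<epsilon> \<xi> - vs \<xi>\<bar>) \<longlongrightarrow> 0) (at_right 0)"
    using assms(7) unfolding viscous_profile_criterion_def by blast
  have U_eq_V: "\<forall>\<^sub>F \<epsilon> in at_right 0. U \<epsilon> = V \<epsilon>"
    using eventually_at_right_less
    by eventually_elim (rule dafermos_solution_unique[OF assms(2) _ U V])
  have "\<forall>\<^sub>F \<epsilon> in at_right 0. set_integrable lborel {a..b} (U \<epsilon>)" for a b
    using eventually_at_right_less by eventually_elim
      (rule borel_integrable_atLeastAtMost',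
        rule continuous_on_subset[OF continuous_on_dafermos_solution[OF U]], auto)
  moreover have "((\<lambda>\<epsilon>. LINT \<xi>:{a..b}|lborel. \<bar>U \<epsilon> \<xi> - vs \<xi>\<bar>) \<longlongrightarrow> 0) (at_right 0)" for a b
    using V_vs by (rule tendsto_cong[THEN iffD1, rotated])
      (use U_eq_V in \<open>auto elim: eventually_mono\<close>)
  ultimately show ?thesis
    by (intro AE_eq_if_common_L1_loc_limit[OF trivial_limit_at_right_real us_int vs_int _ U_us])
qed

end
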